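(* Let $x_1,\dots,x_m$ be i.i.d. uniform points in $[0,1]^d$ with $d$ fixed, and let $A\in\mathbb R^{(m-1)\times d}$ have $k$-th row $2(x_k-x_{k+1})^T$. Then, with probability tending to one as $m\to\infty$ (for any fixed $\epsilon\in(0,1/2)$ and all sufficiently large $m$, with probability at least $1-3d^2e^{-m^{2\epsilon}}$), $$\|(A^TA)^{-1}A^T\|_2\le\sqrt{\frac{3}{m-1}} .$$
   Context: $\|\cdot\|_2$ denotes the spectral (operator) norm. *)

theory Defs
  imports "HOL-Probability.Probability"
begin

definition unif_cube :: "(real^'d::finite) measure" where
  "unif_cube = uniform_measure lborel {x. \<forall>i. 0 \<le> x$i \<and> x$i \<le> 1}"

text \<open>The joint law of m i.i.d. uniform points x_0,...,x_{m-1} (0-based indexing).\<close>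
definition sample_space :: "nat \<Rightarrow> (nat \<Rightarrow> real^'d::finite) measure" where
  "sample_space m = PiM {..<m} (\<lambda>_. unif_cube)"

definition A_row :: "(nat \<Rightarrow> real^'d::finite) \<Rightarrow> nat \<Rightarrow> real^'d" where
  "A_row x k = 2 *\<^sub>R (x k - x (Suc k))"

text \<open>The Gram matrix A^T A (a d x d matrix), where A has rows A_row x k, k < m-1.\<close>
definition gram :: "nat \<Rightarrow> (nat \<Rightarrow> real^'d::finite) \<Rightarrow> real^'d^'d" where
  "gram m x = (\<Sum>k<m-1. (\<chi> i j. A_row x k $ i * A_row x k $ j))"

text \<open>Spectral (operator 2-)norm of the d x n matrix whose columns are B 0, ..., B (n-1),
  viewed as a linear map from R^n to R^d with Euclidean norms.\<close>
definition spec_norm :: "nat \<Rightarrow> (nat \<Rightarrow> real^'d::finite) \<Rightarrow> real" where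
  "spec_norm n B = Sup {norm (\<Sum>k<n. y k *\<^sub>R B k) | y. (\<Sum>k<n. (y k)\<^sup>2) \<le> 1}"

text \<open>Columns of (A^T A)^{-1} A^T: column k is (A^T A)^{-1} (A_row x k).\<close>
definition pinv_col :: "nat \<Rightarrow> (nat \<Rightarrow> real^'d::finite) \<Rightarrow> nat \<Rightarrow> real^'d" where
  "pinv_col m x k = matrix_inv (gram m x) *v A_row x k"

end

theory Submission
  imports Defs "HOL-Real_Asymp.Real_Asymp"
begin

text \<open>
  For \<open>c \<ge> 0\<close> the event "\<open>A\<^sup>TA\<close> is invertible and \<open>\<parallel>(A\<^sup>TA)\<^sup>-\<^sup>1A\<^sup>T\<parallel>\<^sub>2 \<le> \<surd>c\<close>" coincides with the
  lower bound \<open>\<parallel>z\<parallel>\<^sup>2 \<le> c \<parallel>A z\<parallel>\<^sup>2\<close> for all \<open>z\<close> (section 1).  The entries of \<open>A\<^sup>TA/4\<close> are sums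
  over \<open>k\<close> of the increment products \<open>(x\<^sub>k - x\<^sub>k\<^sub>+\<^sub>1)\<^sub>i (x\<^sub>k - x\<^sub>k\<^sub>+\<^sub>1)\<^sub>j\<close>, which take values in
  \<open>[-1,1]\<close> and have mean \<open>[i = j]/6\<close>, by the moments of the uniform distribution on the
  cube and the product structure of the sample space (sections 2 to 4).  Summands whose
  indices have equal parity involve disjoint pairs of points and are independent, so
  Hoeffding's inequality bounds the deviation of the even and of the odd partial sums
  (section 4).  If all entries are within \<open>(m-1)/(12d)\<close> of
  their means, then \<open>\<parallel>A z\<parallel>\<^sup>2 \<ge> (m-1)/3 \<parallel>z\<parallel>\<^sup>2\<close> (section 5).  A union bound over the \<open>2d\<^sup>2\<close> partial
  sums shows that this fails with probability at most \<open>4d\<^sup>2 exp(-(m-1)\<^sup>2/(1152 d\<^sup>2 m))\<close>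
  (section 6), which is eventually below \<open>3d\<^sup>2 exp(-m\<^bsup>2\<epsilon>\<^esup>)\<close> because \<open>2\<epsilon> < 1\<close> (section 7).
\<close>

section \<open>Linear algebra: the event as a lower bound on the Gram matrix\<close>

lemma gram_mult_vec:
  "gram m x *v z = (\<Sum>k<m-1. (A_row x k \<bullet> z) *\<^sub>R A_row x k)"
  unfolding gram_def
  by (simp add: vec_eq_iff matrix_vector_mult_def sum_component inner_vec_def
      sum_distrib_left sum_distrib_right mult_ac; subst sum.swap; simp)

lemma gram_quadratic_form:
  "z \<bullet> (gram m x *v z) = (\<Sum>k<m-1. (A_row x k \<bullet> z)\<^sup>2)"
  by (simp add: gram_mult_vec inner_sum_right power2_eq_square inner_commute)

lemma matrix_inv_inverse:
  assumes "invertible (A :: real^'n^'n)"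
  shows "A ** matrix_inv A = mat 1" and "matrix_inv A ** A = mat 1"
  using someI_ex[OF assms[unfolded invertible_def]] unfolding matrix_inv_def by auto

lemma pinv_col_combination:
  "(\<Sum>k<n. y k *\<^sub>R pinv_col m x k) = matrix_inv (gram m x) *v (\<Sum>k<n. y k *\<^sub>R A_row x k)"
  unfolding pinv_col_def
  by (simp add: linear_sum[OF matrix_vector_mul_linear] matrix_vector_mult_scaleR o_def)

lemma spec_norm_bdd_above:
  fixes B :: "nat \<Rightarrow> 'a::real_normed_vector"
  shows "bdd_above {norm (\<Sum>k<n. y k *\<^sub>R B k) | y. (\<Sum>k<n. (y k)\<^sup>2) \<le> 1}"
proof (rule bdd_aboveI, safe)
  fix y :: "nat \<Rightarrow> real" assume y: "(\<Sum>k<n. (y k)\<^sup>2) \<le> 1"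
  have yk: "\<bar>y k\<bar> \<le> 1" if "k < n" for k
  proof -
    have "(y k)\<^sup>2 \<le> (\<Sum>k<n. (y k)\<^sup>2)"
      using that by (intro member_le_sum) auto
    then show ?thesis using y abs_le_square_iff[of "y k" 1] by simp
  qed
  have "norm (\<Sum>k<n. y k *\<^sub>R B k) \<le> (\<Sum>k<n. norm (y k *\<^sub>R B k))"
    by (rule norm_sum)
  also have "\<dots> \<le> (\<Sum>k<n. norm (B k))"
    using yk by (intro sum_mono) (auto intro!: mult_left_le_one_le)
  finally show "norm (\<Sum>k<n. y k *\<^sub>R B k) \<le> (\<Sum>k<n. norm (B k))" .
qed

definition gram_lower :: "real \<Rightarrow> nat \<Rightarrow> (nat \<Rightarrow> real^'d::finite) \<Rightarrow> bool" where
  "gram_lower c m x \<longleftrightarrow> (\<forall>z. (norm z)\<^sup>2 \<le> c * (\<Sum>k<m-1. (A_row x k \<bullet> z)\<^sup>2))"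

text \<open>A lower bound on the Gram matrix gives invertibility and the bound
  \<open>\<parallel>(A\<^sup>TA)\<^sup>-\<^sup>1A\<^sup>T\<parallel>\<^sub>2 \<le> \<surd>c\<close>: for \<open>z = (A\<^sup>TA)\<^sup>-\<^sup>1A\<^sup>Ty\<close> with \<open>\<parallel>y\<parallel> \<le> 1\<close>, Cauchy--Schwarz gives
  \<open>\<parallel>A z\<parallel>\<^sup>2 = y \<bullet> A z \<le> \<parallel>A z\<parallel>\<close>, hence \<open>\<parallel>A z\<parallel> \<le> 1\<close> and \<open>\<parallel>z\<parallel>\<^sup>2 \<le> c\<close>.\<close>
lemma gram_lower_imp_pinv_bound:
  assumes lower: "gram_lower c m x" and c: "c \<ge> 0"
  shows "invertible (gram m x) \<and> spec_norm (m-1) (pinv_col m x) \<le> sqrt c"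
proof -
  let ?G = "gram m x"
  have inv: "invertible ?G"
    unfolding invertible_left_inverse matrix_left_invertible_ker
  proof (intro allI impI)
    fix z assume "?G *v z = 0"
    then have "(\<Sum>k<m-1. (A_row x k \<bullet> z)\<^sup>2) = 0"
      by (metis gram_quadratic_form inner_zero_right)
    with lower have "(norm z)\<^sup>2 \<le> 0" by (metis gram_lower_def mult_zero_right)
    then show "z = 0" by simp
  qed
  have "spec_norm (m-1) (pinv_col m x) \<le> sqrt c"
    unfolding spec_norm_def
  proof (rule cSup_least)
    show "{norm (\<Sum>k<m-1. y k *\<^sub>R pinv_col m x k) |y. (\<Sum>k<m-1. (y k)\<^sup>2) \<le> 1} \<noteq> {}"
      by (auto intro!: exI[of _ "\<lambda>_. 0"])
  next
    fix v assume "v \<in> {norm (\<Sum>k<m-1. y k *\<^sub>R pinv_col m x k) |y. (\<Sum>k<m-1. (y k)\<^sup>2) \<le> 1}"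
    then obtain y where y: "(\<Sum>k<m-1. (y k)\<^sup>2) \<le> 1"
      and v: "v = norm (\<Sum>k<m-1. y k *\<^sub>R pinv_col m x k)"
      by blast
    define w where "w = (\<Sum>k<m-1. y k *\<^sub>R A_row x k)"
    define z where "z = matrix_inv ?G *v w"
    have vz: "v = norm z" using v by (simp add: pinv_col_combination z_def w_def)
    have Gz: "?G *v z = w"
      by (simp add: z_def matrix_vector_mul_assoc matrix_inv_inverse(1)[OF inv])
    define q where "q = (\<Sum>k<m-1. (A_row x k \<bullet> z)\<^sup>2)"
    have q0: "q \<ge> 0" unfolding q_def by (intro sum_nonneg) auto
    have "q = z \<bullet> w" using gram_quadratic_form[of z m x] Gz by (simp add: q_def)
    also have "\<dots> = (\<Sum>k<m-1. y k * (A_row x k \<bullet> z))"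
      by (simp add: w_def inner_sum_right inner_commute)
    finally have "q\<^sup>2 = (\<Sum>k<m-1. y k * (A_row x k \<bullet> z))\<^sup>2" by simp
    also have "\<dots> \<le> (\<Sum>k<m-1. (y k)\<^sup>2) * q"
      unfolding q_def by (rule Cauchy_Schwarz_ineq_sum)
    also have "\<dots> \<le> q" using y q0 by (intro mult_left_le_one_le sum_nonneg) auto
    finally have q1: "q \<le> 1" using q0 by (cases "q = 0") (auto simp: power2_eq_square)
    have "(norm z)\<^sup>2 \<le> c * q" using lower by (simp add: gram_lower_def q_def)
    also have "\<dots> \<le> c" using q1 c q0 by (simp add: mult_right_le_one_le)
    finally show "v \<le> sqrt c" using vz by (simp add: real_le_rsqrt)
  qed
  with inv show ?thesis by blast
qed

text \<open>Conversely, the pseudo-inverse bound gives the lower bound: apply \<open>(A\<^sup>TA)\<^sup>-\<^sup>1A\<^sup>T\<close> to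
  the unit vector \<open>A z / \<parallel>A z\<parallel>\<close>, which is mapped to \<open>z / \<parallel>A z\<parallel>\<close>.\<close>
lemma pinv_bound_imp_gram_lower:
  fixes x :: "nat \<Rightarrow> real^'d::finite"
  assumes inv: "invertible (gram m x)" and bound: "spec_norm (m-1) (pinv_col m x) \<le> sqrt c"
    and c: "c \<ge> 0"
  shows "gram_lower c m x"
  unfolding gram_lower_def
proof
  fix z :: "real^'d"
  let ?G = "gram m x"
  define q where "q = (\<Sum>k<m-1. (A_row x k \<bullet> z)\<^sup>2)"
  have q0: "q \<ge> 0" unfolding q_def by (intro sum_nonneg) auto
  show "(norm z)\<^sup>2 \<le> c * q"
  proof (cases "q = 0")
    case True
    then have "\<forall>k\<in>{..<m-1}. (A_row x k \<bullet> z)\<^sup>2 = 0"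
      unfolding q_def by (subst (asm) sum_nonneg_eq_0_iff) auto
    then have "?G *v z = 0" by (simp add: gram_mult_vec)
    then have "z = 0"
      by (metis inj_matrix_vector_mult[OF inv] inj_eq matrix_vector_mult_0_right)
    then show ?thesis using True by simp
  next
    case False
    define r where "r = sqrt q"
    have r0: "r > 0" using q0 False by (simp add: r_def)
    define y where "y = (\<lambda>k. (A_row x k \<bullet> z) / r)"
    have "(\<Sum>k<m-1. (y k)\<^sup>2) = q / r\<^sup>2"
      by (simp add: y_def q_def power_divide sum_divide_distrib)
    also have "\<dots> = 1" using q0 False by (simp add: r_def)
    finally have y_unit: "(\<Sum>k<m-1. (y k)\<^sup>2) \<le> 1" by simp
    have "(\<Sum>k<m-1. y k *\<^sub>R A_row x k) = (1/r) *\<^sub>R (?G *v z)"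
      by (simp add: gram_mult_vec y_def scaleR_sum_right)
    then have "(\<Sum>k<m-1. y k *\<^sub>R pinv_col m x k) = (1/r) *\<^sub>R z"
      by (simp add: pinv_col_combination matrix_vector_mult_scaleR matrix_vector_mul_assoc
          matrix_inv_inverse(2)[OF inv])
    then have "norm ((1/r) *\<^sub>R z) \<le> spec_norm (m-1) (pinv_col m x)"
      unfolding spec_norm_def using y_unit
      by (intro cSup_upper spec_norm_bdd_above) (metis (mono_tags, lifting) mem_Collect_eq)
    also note bound
    finally have "norm z \<le> sqrt c * r" using r0 by (simp add: divide_le_eq)
    then have "(norm z)\<^sup>2 \<le> (sqrt c * r)\<^sup>2" by (intro power_mono) auto
    then show ?thesis using c q0 by (simp add: power_mult_distrib r_def)
  qed
qed

lemma pinv_bound_iff_gram_lower: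
  assumes "c \<ge> 0"
  shows "invertible (gram m x) \<and> spec_norm (m-1) (pinv_col m x) \<le> sqrt c \<longleftrightarrow> gram_lower c m x"
  using gram_lower_imp_pinv_bound pinv_bound_imp_gram_lower assms by blast

section \<open>The uniform distribution on the unit cube\<close>

lemma unif_cube_cbox: "unif_cube = uniform_measure lborel (cbox 0 (1 :: real^'d::finite))"
proof -
  have "{x. \<forall>i. 0 \<le> x$i \<and> x$i \<le> 1} = cbox 0 (1 :: real^'d)"
    by (auto simp: mem_box_cart)
  then show ?thesis by (simp add: unif_cube_def)
qed

text \<open>Its events are the Borel sets (needed to transfer measurability along projections).\<close>
lemma sets_unif_cube [measurable_cong, simp]: "sets unif_cube = sets borel"
  by (simp add: unif_cube_def)

lemma prod_Basis_vec: "(\<Prod>b\<in>(Basis :: (real^'n::finite) set). h b) = (\<Prod>i\<in>UNIV. h (axis i 1))"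
proof -
  have inj: "inj (\<lambda>i::'n. axis i (1::real))" by (auto simp: inj_def axis_eq_axis)
  have B: "(Basis :: (real^'n) set) = range (\<lambda>i. axis i 1)" by (auto simp: Basis_vec_def)
  show ?thesis by (simp only: B prod.reindex[OF inj] o_def)
qed

text \<open>The unit cube has Lebesgue measure 1, so the uniform measure is its restriction of \<open>lborel\<close>.\<close>
lemma emeasure_unit_cube: "emeasure lborel (cbox 0 (1 :: real^'d::finite)) = 1"
proof -
  have "\<forall>b\<in>(Basis :: (real^'d) set). 0 \<le> (1 :: real^'d) \<bullet> b"
    by (auto simp: Basis_vec_def inner_axis)
  then show ?thesis by (simp add: emeasure_lborel_cbox_eq prod_Basis_vec inner_axis)
qed

lemma prob_space_unif_cube: "prob_space (unif_cube :: (real^'d::finite) measure)"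
  unfolding unif_cube_cbox by (rule prob_space_uniform_measure) (simp_all add: emeasure_unit_cube)

lemma AE_unif_cube: "AE x in (unif_cube :: (real^'d::finite) measure). \<forall>i. x$i \<in> {0..1}"
  unfolding unif_cube_cbox by (rule AE_uniform_measureI) (auto simp: mem_box_cart)

lemma nn_integral_lborel_prod_vec:
  fixes g :: "'d::finite \<Rightarrow> real \<Rightarrow> ennreal"
  assumes [measurable]: "\<And>i. g i \<in> borel_measurable borel"
  shows "(\<integral>\<^sup>+x. (\<Prod>i\<in>UNIV. g i (x $ i)) \<partial>(lborel :: (real^'d) measure))
       = (\<Prod>i\<in>UNIV. \<integral>\<^sup>+t. g i t \<partial>lborel)"
proof -
  define f where "f b = g (THE i. b = axis i 1)" for b :: "real^'d"
  have f_axis: "f (axis i 1) = g i" for i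
    unfolding f_def by (rule arg_cong[of _ _ g]) (auto simp: axis_eq_axis)
  have [measurable]: "f b \<in> borel_measurable borel" for b
    by (simp add: f_def)
  have "(\<integral>\<^sup>+x. (\<Prod>i\<in>UNIV. g i (x $ i)) \<partial>lborel)
      = (\<integral>\<^sup>+x. (\<Prod>b\<in>(Basis :: (real^'d) set). f b (x \<bullet> b)) \<partial>lborel)"
    by (simp add: prod_Basis_vec f_axis inner_axis)
  also have "\<dots> = (\<Prod>b\<in>(Basis :: (real^'d) set). \<integral>\<^sup>+t. f b t \<partial>lborel)"
    by (rule nn_integral_lborel_prod) auto
  also have "\<dots> = (\<Prod>i\<in>UNIV. \<integral>\<^sup>+t. g i t \<partial>lborel)"
    by (simp add: prod_Basis_vec f_axis)
  finally show ?thesis .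
qed

lemma nn_integral_power_01:
  "(\<integral>\<^sup>+t. ennreal (t ^ k) * indicator {0..1} t \<partial>lborel) = ennreal (1 / Suc k)"
proof -
  have "(\<integral>\<^sup>+t. ennreal (t ^ k) * indicator {0..1} t \<partial>lborel)
      = (\<integral>\<^sup>+t. ennreal (t ^ k * indicator {0..1} t) \<partial>lborel)"
    by (intro nn_integral_cong) (auto simp: indicator_def)
  also have "\<dots> = ennreal (\<integral>t. t ^ k * indicator {0..1} t \<partial>lborel)"
    by (intro nn_integral_eq_integral borel_integrable_atLeastAtMost AE_I2)
       (auto simp: indicator_def)
  also have "\<dots> = ennreal (1 / Suc k)"
    by (subst integral_power) auto
  finally show ?thesis .
qed

text \<open>Moments of the uniform distribution on the cube: the coordinates are independent
  and uniform on \<open>[0,1]\<close>, so \<open>E \<Prod>\<^sub>i x\<^sub>i\<^bsup>p\<^sub>i\<^esup> = \<Prod>\<^sub>i 1/(p\<^sub>i+1)\<close>.\<close>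
lemma integral_unif_cube_monomial:
  "integral\<^sup>L (unif_cube :: (real^'d::finite) measure) (\<lambda>x. \<Prod>i\<in>UNIV. (x $ i) ^ p i)
     = (\<Prod>i\<in>UNIV. 1 / real (Suc (p i)))"
proof -
  let ?f = "\<lambda>x::real^'d. \<Prod>i\<in>UNIV. (x $ i) ^ p i"
  have ind: "ennreal (?f x) * indicator (cbox 0 1) x
      = (\<Prod>i\<in>UNIV. ennreal ((x $ i) ^ p i) * indicator {0..1} (x $ i))" for x :: "real^'d"
  proof (cases "x \<in> cbox 0 1")
    case True
    then have "\<forall>i. x $ i \<in> {0..1}" by (auto simp: mem_box_cart)
    then show ?thesis using True by (simp add: prod_ennreal)
  next
    case False
    then obtain i where "x $ i \<notin> {0..1}" by (auto simp: mem_box_cart)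
    then have "indicator {0..1} (x $ i) = (0 :: ennreal)" by simp
    then show ?thesis using False by (auto intro!: exI[of _ i])
  qed
  have "(\<integral>\<^sup>+x. ennreal (?f x) \<partial>unif_cube) = (\<integral>\<^sup>+x. ennreal (?f x) * indicator (cbox 0 1) x \<partial>lborel)"
    unfolding unif_cube_cbox by (subst nn_integral_uniform_measure) (auto simp: emeasure_unit_cube divide_ennreal_def)
  also have "\<dots> = (\<Prod>i\<in>UNIV. \<integral>\<^sup>+t. ennreal (t ^ p i) * indicator {0..1} t \<partial>lborel)"
    unfolding ind by (rule nn_integral_lborel_prod_vec) auto
  also have "\<dots> = ennreal (\<Prod>i\<in>UNIV. 1 / real (Suc (p i)))"
    by (simp add: nn_integral_power_01 prod_ennreal)
  finally have nn: "(\<integral>\<^sup>+x. ennreal (?f x) \<partial>unif_cube) = ennreal (\<Prod>i\<in>UNIV. 1 / real (Suc (p i)))" .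
  have "integral\<^sup>L unif_cube ?f = enn2real (\<integral>\<^sup>+x. ennreal (?f x) \<partial>unif_cube)"
    by (rule integral_eq_nn_integral)
       (auto intro!: prod_nonneg intro: eventually_mono[OF AE_unif_cube])
  then show ?thesis by (simp add: nn prod_nonneg)
qed

lemma unif_cube_mean: "integral\<^sup>L (unif_cube :: (real^'d::finite) measure) (\<lambda>x. x $ i) = 1/2"
proof -
  have "(\<Prod>l\<in>UNIV. 1 / real (Suc (if l = i then 1 else 0))) = (\<Prod>l\<in>(UNIV::'d set). if l = i then 1/2 else 1)"
    by (intro prod.cong) auto
  then show ?thesis
    using integral_unif_cube_monomial[where p = "\<lambda>l::'d. if l = i then 1 else 0"]
    by (simp add: if_distrib[of "\<lambda>n. _ ^ n"] prod.delta cong: if_cong)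
qed

lemma unif_cube_second_moment:
  "integral\<^sup>L (unif_cube :: (real^'d::finite) measure) (\<lambda>x. x $ i * x $ j) = (if i = j then 1/3 else 1/4)"
proof -
  define p :: "'d \<Rightarrow> nat" where "p l = (if l = i then 1 else 0) + (if l = j then 1 else 0)" for l
  have mono: "(\<Prod>l\<in>UNIV. (x $ l) ^ p l) = x $ i * x $ j" for x :: "real^'d"
    by (simp add: p_def power_add prod.distrib if_distrib[of "\<lambda>n. _ ^ n"] prod.delta cong: if_cong)
  have "(\<Prod>l\<in>UNIV. 1 / real (Suc (p l)))
      = (\<Prod>l\<in>UNIV. (if l = i then 1/2 else 1) * (if l = j then 1/2 else 1) * (if i = j \<and> l = i then 4/3 else 1))"
    by (intro prod.cong) (auto simp: p_def)
  also have "\<dots> = (if i = j then 1/3 else 1/4)"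
    by (simp add: prod.distrib prod.delta)
  finally show ?thesis
    using integral_unif_cube_monomial[of p] by (simp add: mono)
qed

section \<open>The sample space of \<open>m\<close> independent uniform points\<close>

lemma prob_space_sample_space: "prob_space (sample_space m :: (nat \<Rightarrow> real^'d::finite) measure)"
  unfolding sample_space_def by (intro prob_space_PiM prob_space_unif_cube)

lemma measurable_point [measurable]:
  assumes "k < m"
  shows "(\<lambda>x. x k) \<in> borel_measurable (sample_space m :: (nat \<Rightarrow> real^'d::finite) measure)"
proof -
  have "(\<lambda>x. x k) \<in> measurable (sample_space m :: (nat \<Rightarrow> real^'d) measure) unif_cube"
    unfolding sample_space_def using assms by (intro measurable_component_singleton) auto
  then show ?thesis by (simp cong: measurable_cong_sets)
qed

lemma integral_sample_space_prod:
  fixes f :: "nat \<Rightarrow> real^'d::finite \<Rightarrow> real"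
  assumes J: "J \<subseteq> {..<m}" and int: "\<And>l. l \<in> J \<Longrightarrow> integrable unif_cube (f l)"
  shows "integrable (sample_space m) (\<lambda>\<omega>. \<Prod>l\<in>J. f l (\<omega> l))"
    and "integral\<^sup>L (sample_space m) (\<lambda>\<omega>. \<Prod>l\<in>J. f l (\<omega> l)) = (\<Prod>l\<in>J. integral\<^sup>L unif_cube (f l))"
proof -
  interpret U: prob_space "unif_cube :: (real^'d) measure" by (rule prob_space_unif_cube)
  interpret P: product_sigma_finite "\<lambda>_::nat. unif_cube :: (real^'d) measure" by unfold_locales
  define F where "F l = (if l \<in> J then f l else (\<lambda>_. 1))" for l
  have prod_F: "(\<Prod>l\<in>{..<m}. F l (\<omega> l)) = (\<Prod>l\<in>J. f l (\<omega> l))" for \<omega> :: "nat \<Rightarrow> real^'d"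
  proof -
    have "(\<Prod>l\<in>{..<m}. F l (\<omega> l)) = (\<Prod>l\<in>{..<m} \<inter> J. f l (\<omega> l))"
      by (simp add: F_def if_distrib[of "\<lambda>g. g (\<omega> _)"] prod.inter_restrict)
    then show ?thesis using J by (simp add: Int_absorb1)
  qed
  have int_F: "integrable unif_cube (F l)" for l
    using int by (auto simp: F_def)
  show "integrable (sample_space m) (\<lambda>\<omega>. \<Prod>l\<in>J. f l (\<omega> l))"
    using P.product_integrable_prod[of "{..<m}" F] int_F unfolding sample_space_def prod_F by simp
  have "integral\<^sup>L (sample_space m) (\<lambda>\<omega>. \<Prod>l\<in>{..<m}. F l (\<omega> l))
      = (\<Prod>l\<in>{..<m}. integral\<^sup>L unif_cube (F l))"
    unfolding sample_space_def using int_F by (intro P.product_integral_prod) auto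
  also have "\<dots> = (\<Prod>l\<in>{..<m} \<inter> J. integral\<^sup>L unif_cube (f l))"
    using U.prob_space by (simp add: F_def if_distrib[of "integral\<^sup>L _"] prod.inter_restrict cong: if_cong)
  finally show "integral\<^sup>L (sample_space m) (\<lambda>\<omega>. \<Prod>l\<in>J. f l (\<omega> l)) = (\<Prod>l\<in>J. integral\<^sup>L unif_cube (f l))"
    using J by (simp add: prod_F Int_absorb1)
qed

lemma integral_sample_space_single:
  fixes f :: "real^'d::finite \<Rightarrow> real"
  assumes "k < m" and "integrable unif_cube f"
  shows "integrable (sample_space m) (\<lambda>\<omega>. f (\<omega> k))"
    and "integral\<^sup>L (sample_space m) (\<lambda>\<omega>. f (\<omega> k)) = integral\<^sup>L unif_cube f"
  using integral_sample_space_prod[of "{k}" m "\<lambda>_. f"] assms by simp_all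

lemma integral_sample_space_pair:
  fixes f g :: "real^'d::finite \<Rightarrow> real"
  assumes "k \<noteq> l" "k < m" "l < m" and "integrable unif_cube f" "integrable unif_cube g"
  shows "integrable (sample_space m) (\<lambda>\<omega>. f (\<omega> k) * g (\<omega> l))"
    and "integral\<^sup>L (sample_space m) (\<lambda>\<omega>. f (\<omega> k) * g (\<omega> l)) = integral\<^sup>L unif_cube f * integral\<^sup>L unif_cube g"
  using integral_sample_space_prod[of "{k, l}" m "\<lambda>n. if n = k then f else g"] assms by simp_all

lemma measurable_A_row:
  assumes "k < m - 1"
  shows "(\<lambda>x. A_row x k) \<in> borel_measurable (sample_space m :: (nat \<Rightarrow> real^'d::finite) measure)"
  using assms unfolding A_row_def
  by (intro borel_measurable_scaleR borel_measurable_diff borel_measurable_const measurable_point) auto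

text \<open>The event \<open>gram_lower c m\<close> is measurable: by continuity in \<open>z\<close>, it suffices to quantify
  over a countable dense set of vectors \<open>z\<close>.\<close>
lemma sets_gram_lower:
  "{x \<in> space (sample_space m :: (nat \<Rightarrow> real^'d::finite) measure). gram_lower c m x}
     \<in> sets (sample_space m)"
proof -
  obtain D :: "(real^'d) set" where D: "countable D" "\<And>X. open X \<Longrightarrow> X \<noteq> {} \<Longrightarrow> \<exists>d\<in>D. d \<in> X"
    using countable_dense_exists by blast
  let ?P = "\<lambda>z x. (norm z)\<^sup>2 \<le> c * (\<Sum>k<m-1. (A_row x k \<bullet> z)\<^sup>2)"
  have dense: "gram_lower c m x \<longleftrightarrow> (\<forall>z\<in>D. ?P z x)" for x
    unfolding gram_lower_def
  proof (intro iffI ballI allI)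
    fix z assume all_D: "\<forall>z\<in>D. ?P z x"
    show "?P z x"
    proof (rule ccontr)
      let ?X = "{z. c * (\<Sum>k<m-1. (A_row x k \<bullet> z)\<^sup>2) < (norm z)\<^sup>2}"
      assume "\<not> ?P z x"
      then have "open ?X" "z \<in> ?X" by (auto intro!: open_Collect_less continuous_intros)
      then obtain d where "d \<in> D" "d \<in> ?X" using D(2)[of ?X] by blast
      then show False using all_D by force
    qed
  qed auto
  have "{x \<in> space (sample_space m :: (nat \<Rightarrow> real^'d) measure). \<forall>z\<in>D. ?P z x} \<in> sets (sample_space m)"
  proof (rule sets.sets_Collect_countable_All'[OF _ D(1)])
    fix z :: "real^'d"
    have "(\<lambda>x. c * (\<Sum>k<m-1. (A_row x k \<bullet> z)\<^sup>2))
        \<in> borel_measurable (sample_space m :: (nat \<Rightarrow> real^'d) measure)"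
      using measurable_A_row by (intro borel_measurable_times borel_measurable_const
          borel_measurable_sum borel_measurable_power borel_measurable_inner) auto
    then show "{x \<in> space (sample_space m :: (nat \<Rightarrow> real^'d) measure). ?P z x} \<in> sets (sample_space m)"
      by measurable
  qed
  then show ?thesis by (simp add: dense)
qed

section \<open>Entries of the Gram matrix and their concentration\<close>

text \<open>The \<open>(i,j)\<close>-entry of \<open>A\<^sup>TA\<close> is \<open>4 \<Sum>\<^sub>k incr_prod i j k x\<close>, a sum of products of coordinate
  increments between consecutive points.\<close>
definition incr_prod :: "'d::finite \<Rightarrow> 'd \<Rightarrow> nat \<Rightarrow> (nat \<Rightarrow> real^'d) \<Rightarrow> real" where
  "incr_prod i j k x = (x k $ i - x (Suc k) $ i) * (x k $ j - x (Suc k) $ j)"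

text \<open>The mean of \<open>incr_prod i j k\<close>: twice the covariance matrix \<open>I/12\<close> of the uniform distribution
  on the cube.\<close>
definition incr_mean :: "'d::finite \<Rightarrow> 'd \<Rightarrow> real" where
  "incr_mean i j = (if i = j then 1/6 else 0)"

lemma measurable_incr_prod [measurable]:
  assumes "Suc k < m"
  shows "incr_prod i j k \<in> borel_measurable (sample_space m :: (nat \<Rightarrow> real^'d::finite) measure)"
  using assms unfolding incr_prod_def[abs_def]
  by (intro borel_measurable_times borel_measurable_diff
      measurable_compose[OF measurable_point borel_measurable_nth]) auto

lemma integrable_coordinates:
  "integrable (unif_cube :: (real^'d::finite) measure) (\<lambda>x. x $ i)"
  "integrable (unif_cube :: (real^'d::finite) measure) (\<lambda>x. x $ i * x $ j)"
proof -
  interpret U: prob_space "unif_cube :: (real^'d) measure" by (rule prob_space_unif_cube)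
  show "integrable unif_cube (\<lambda>x::real^'d. x $ i)"
    by (rule U.integrable_const_bound[where B = 1])
       (auto intro: eventually_mono[OF AE_unif_cube])
  show "integrable unif_cube (\<lambda>x::real^'d. x $ i * x $ j)"
    by (rule U.integrable_const_bound[where B = 1])
       (auto intro!: mult_le_one simp: abs_mult intro: eventually_mono[OF AE_unif_cube])
qed

text \<open>For independent uniform \<open>u = x\<^sub>k\<close>, \<open>v = x\<^sub>k\<^sub>+\<^sub>1\<close>:
  \<open>E (u\<^sub>i - v\<^sub>i)(u\<^sub>j - v\<^sub>j) = 2 (E u\<^sub>iu\<^sub>j - E u\<^sub>i E u\<^sub>j)\<close>, which is \<open>1/6\<close> if \<open>i = j\<close> and \<open>0\<close> otherwise.\<close>
lemma expectation_incr_prod: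
  assumes "Suc k < m"
  shows "integral\<^sup>L (sample_space m :: (nat \<Rightarrow> real^'d::finite) measure) (incr_prod i j k) = incr_mean i j"
proof -
  have k: "k < m" "Suc k < m" using assms by auto
  have expand: "incr_prod i j k = (\<lambda>\<omega>. ((\<omega> k $ i * \<omega> k $ j - \<omega> k $ i * \<omega> (Suc k) $ j)
      - \<omega> (Suc k) $ i * \<omega> k $ j) + \<omega> (Suc k) $ i * \<omega> (Suc k) $ j)"
    by (auto simp: incr_prod_def fun_eq_iff algebra_simps)
  note single = integral_sample_space_single[OF k(1) integrable_coordinates(2)[of i j]]
    integral_sample_space_single[OF k(2) integrable_coordinates(2)[of i j]]
  note pair = integral_sample_space_pair[of k "Suc k", OF _ k
      integrable_coordinates(1)[of i] integrable_coordinates(1)[of j]]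
    integral_sample_space_pair[of "Suc k" k, OF _ k(2,1)
      integrable_coordinates(1)[of i] integrable_coordinates(1)[of j]]
  have "integral\<^sup>L (sample_space m) (incr_prod i j k)
      = 2 * (integral\<^sup>L unif_cube (\<lambda>x::real^'d. x $ i * x $ j)
             - integral\<^sup>L unif_cube (\<lambda>x::real^'d. x $ i) * integral\<^sup>L unif_cube (\<lambda>x::real^'d. x $ j))"
    unfolding expand using single pair by (simp add: integral_add integral_diff)
  then show ?thesis
    by (simp add: unif_cube_second_moment unif_cube_mean incr_mean_def)
qed

lemma AE_incr_prod_bounded:
  assumes "Suc k < m"
  shows "AE x in (sample_space m :: (nat \<Rightarrow> real^'d::finite) measure). incr_prod i j k x \<in> {-1..1}"
proof -
  have in_cube: "AE x in (sample_space m :: (nat \<Rightarrow> real^'d) measure). \<forall>i. x l $ i \<in> {0..1}"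
    if "l < m" for l
    unfolding sample_space_def using that
    by (intro AE_PiM_component prob_space_unif_cube AE_unif_cube) auto
  show ?thesis
  proof (rule eventually_mono[OF eventually_conj[OF in_cube in_cube]])
    show "k < m" "Suc k < m" using assms by auto
    fix x :: "nat \<Rightarrow> real^'d"
    assume "(\<forall>i. x k $ i \<in> {0..1}) \<and> (\<forall>i. x (Suc k) $ i \<in> {0..1})"
    then have "\<bar>x k $ l - x (Suc k) $ l\<bar> \<le> 1" for l
      by (auto simp: abs_le_iff) (smt (verit))+
    then have "\<bar>incr_prod i j k x\<bar> \<le> 1"
      unfolding incr_prod_def abs_mult by (intro mult_le_one) auto
    then show "incr_prod i j k x \<in> {-1..1}" by auto
  qed
qed

lemma indep_points:
  assumes "m > 0"
  shows "prob_space.indep_vars (sample_space m :: (nat \<Rightarrow> real^'d::finite) measure)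
           (\<lambda>_. unif_cube) (\<lambda>k \<omega>. \<omega> k) {..<m}"
proof -
  let ?M = "sample_space m :: (nat \<Rightarrow> real^'d) measure"
  interpret M: prob_space ?M by (rule prob_space_sample_space)
  have rv: "(\<lambda>\<omega>. \<omega> k) \<in> measurable ?M unif_cube" if "k \<in> {..<m}" for k
    unfolding sample_space_def using that by (intro measurable_component_singleton) auto
  have "distr ?M (\<Pi>\<^sub>M i\<in>{..<m}. unif_cube) (\<lambda>x. \<lambda>i\<in>{..<m}. x i) = distr ?M ?M (\<lambda>x. x)"
    unfolding sample_space_def
    by (intro distr_cong) (auto simp: space_PiM fun_eq_iff PiE_def extensional_def)
  also have "\<dots> = (\<Pi>\<^sub>M i\<in>{..<m}. distr ?M unif_cube (\<lambda>\<omega>. \<omega> i))"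
    unfolding sample_space_def
    by (simp, intro PiM_cong refl distr_PiM_component[symmetric] prob_space_unif_cube) simp
  finally show ?thesis
    using assms by (subst M.indep_vars_iff_distr_eq_PiM'[OF _ rv]) auto
qed

text \<open>Increments over pairwise disjoint pairs of consecutive points are independent; this
  holds in particular for all even (or all odd) indices k.\<close>
lemma indep_incr_prod:
  assumes K: "K \<subseteq> {k. Suc k < m}" "K \<noteq> {}"
    and disj: "disjoint_family_on (\<lambda>k. {k, Suc k}) K"
  shows "prob_space.indep_vars (sample_space m :: (nat \<Rightarrow> real^'d::finite) measure)
           (\<lambda>_. borel) (\<lambda>k. incr_prod i j k) K"
proof -
  let ?M = "sample_space m :: (nat \<Rightarrow> real^'d) measure"
  interpret M: prob_space ?M by (rule prob_space_sample_space)
  have "m > 0" using K by auto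
  have pairs: "M.indep_vars (\<lambda>k. PiM {k, Suc k} (\<lambda>_. unif_cube))
      (\<lambda>k \<omega>. restrict (\<lambda>l. \<omega> l) {k, Suc k}) K"
    using K disj \<open>m > 0\<close> by (intro M.indep_vars_restrict[OF indep_points]) auto
  define Y where "Y k r = (r k $ i - r (Suc k) $ i) * (r k $ j - r (Suc k) $ j)"
    for k and r :: "nat \<Rightarrow> real^'d"
  have "Y k \<in> borel_measurable (PiM {k, Suc k} (\<lambda>_. unif_cube))" for k
  proof -
    have "(\<lambda>r. r l) \<in> borel_measurable (PiM {k, Suc k} (\<lambda>_. unif_cube :: (real^'d) measure))"
      if "l \<in> {k, Suc k}" for l
      using measurable_component_singleton[OF that, of "\<lambda>_. unif_cube :: (real^'d) measure"]
      by (simp cong: measurable_cong_sets)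
    then show ?thesis unfolding Y_def[abs_def]
      by (intro borel_measurable_times borel_measurable_diff
          measurable_compose[OF _ borel_measurable_nth]) auto
  qed
  then have "M.indep_vars (\<lambda>_. borel) (\<lambda>k x. Y k (restrict (\<lambda>l. x l) {k, Suc k})) K"
    by (rule M.indep_vars_compose2[OF pairs])
  moreover have "(\<lambda>k x. Y k (restrict (\<lambda>l. x l) {k, Suc k})) = (\<lambda>k. incr_prod i j k)"
    by (auto simp: fun_eq_iff Y_def incr_prod_def)
  ultimately show ?thesis by simp
qed

definition deviation :: "'d::finite \<Rightarrow> 'd \<Rightarrow> nat set \<Rightarrow> (nat \<Rightarrow> real^'d) \<Rightarrow> real" where
  "deviation i j K x = (\<Sum>k\<in>K. incr_prod i j k x) - real (card K) * incr_mean i j"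

lemma deviation_tail_bound:
  assumes K: "K \<subseteq> {k. Suc k < m}" and disj: "disjoint_family_on (\<lambda>k. {k, Suc k}) K"
    and "K \<noteq> {}" and "t \<ge> 0"
  shows "measure (sample_space m :: (nat \<Rightarrow> real^'d::finite) measure)
           {x \<in> space (sample_space m). t \<le> \<bar>deviation i j K x\<bar>}
         \<le> 2 * exp (- t\<^sup>2 / (2 * real (card K)))"
proof -
  let ?M = "sample_space m :: (nat \<Rightarrow> real^'d) measure"
  have fin: "finite K" using K by (intro finite_subset[OF _ finite_lessThan[of m]]) auto
  interpret M: prob_space ?M by (rule prob_space_sample_space)
  interpret H: Hoeffding_ineq ?M K "\<lambda>k. incr_prod i j k" "\<lambda>_. -1" "\<lambda>_. 1"
      "\<Sum>k\<in>K. integral\<^sup>L ?M (incr_prod i j k)"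
  proof unfold_locales
    show "M.indep_vars (\<lambda>_. borel) (\<lambda>k. incr_prod i j k) K"
      by (rule indep_incr_prod[OF K \<open>K \<noteq> {}\<close> disj])
    show "AE x in ?M. incr_prod i j k x \<in> {-1..1}" if "k \<in> K" for k
      using that K by (intro AE_incr_prod_bounded) auto
  qed (rule fin)
  have mean: "(\<Sum>k\<in>K. integral\<^sup>L ?M (incr_prod i j k)) = real (card K) * incr_mean i j"
    using K by (simp add: expectation_incr_prod subset_eq)
  have "(\<Sum>k\<in>K. (1 - (-1::real))\<^sup>2) > 0"
    using fin \<open>K \<noteq> {}\<close> by (simp add: card_gt_0_iff)
  from H.Hoeffding_ineq_abs_ge[OF \<open>t \<ge> 0\<close> this]
  show ?thesis by (simp add: deviation_def mean)
qed

section \<open>From concentrated entries to a lower bound on the Gram matrix\<close>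

lemma sum_A_row_inner_sq:
  "(\<Sum>k\<in>K. (A_row x k \<bullet> z)\<^sup>2)
     = 4 * (\<Sum>i\<in>UNIV. \<Sum>j\<in>UNIV. z $ i * z $ j * (\<Sum>k\<in>K. incr_prod i j k x))"
proof -
  have sq: "(A_row x k \<bullet> z)\<^sup>2 = 4 * (\<Sum>i\<in>UNIV. \<Sum>j\<in>UNIV. z $ i * z $ j * incr_prod i j k x)" for k
  proof -
    have "A_row x k \<bullet> z = 2 * (\<Sum>i\<in>UNIV. (x k $ i - x (Suc k) $ i) * z $ i)"
      by (simp add: A_row_def inner_vec_def sum_distrib_left mult_ac)
    then show ?thesis
      by (simp add: power2_eq_square sum_product incr_prod_def mult_ac)
  qed
  have "(\<Sum>k\<in>K. \<Sum>i\<in>UNIV. \<Sum>j\<in>UNIV. z $ i * z $ j * incr_prod i j k x)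
      = (\<Sum>i\<in>UNIV. \<Sum>j\<in>UNIV. \<Sum>k\<in>K. z $ i * z $ j * incr_prod i j k x)"
    by (subst sum.swap) (simp add: sum.swap[of _ K])
  then show ?thesis
    by (simp add: sq sum_distrib_left[symmetric])
qed

lemma norm_square_vec: "(norm (z :: real^'d::finite))\<^sup>2 = (\<Sum>i\<in>UNIV. (z $ i)\<^sup>2)"
  unfolding power2_norm_eq_inner inner_vec_def by (simp add: power2_eq_square)

text \<open>A quadratic form whose coefficients are bounded by \<open>s\<close> is bounded by \<open>s d \<parallel>z\<parallel>\<^sup>2\<close>,
  since \<open>(\<Sum>\<^sub>i \<bar>z\<^sub>i\<bar>)\<^sup>2 \<le> d \<parallel>z\<parallel>\<^sup>2\<close> by Cauchy--Schwarz.\<close>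
lemma quadratic_form_entrywise_bound:
  fixes z :: "real^'d::finite"
  assumes E: "\<And>i j. \<bar>E i j\<bar> \<le> s"
  shows "\<bar>\<Sum>i\<in>UNIV. \<Sum>j\<in>UNIV. z $ i * z $ j * E i j\<bar> \<le> s * real CARD('d) * (norm z)\<^sup>2"
proof -
  have s: "s \<ge> 0" using E abs_ge_zero order_trans by blast
  have "\<bar>\<Sum>i\<in>UNIV. \<Sum>j\<in>UNIV. z $ i * z $ j * E i j\<bar>
      \<le> (\<Sum>i\<in>UNIV. \<Sum>j\<in>UNIV. \<bar>z $ i\<bar> * \<bar>z $ j\<bar> * s)"
    by (rule order_trans[OF sum_abs], intro sum_mono order_trans[OF sum_abs])
       (simp add: abs_mult mult_left_mono E)
  also have "\<dots> = s * (\<Sum>i\<in>UNIV. \<bar>z $ i\<bar>)\<^sup>2"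
    by (simp add: power2_eq_square sum_product sum_distrib_left mult_ac)
  also have "\<dots> \<le> s * (real CARD('d) * (\<Sum>i\<in>UNIV. (z $ i)\<^sup>2))"
    using Cauchy_Schwarz_ineq_sum[of "\<lambda>_. 1" "\<lambda>i. \<bar>z $ i\<bar>" UNIV] s
    by (intro mult_left_mono) simp_all
  finally show ?thesis by (simp add: norm_square_vec mult_ac)
qed

text \<open>Deterministic core: if every entry of \<open>A\<^sup>TA/4\<close> is within \<open>(m-1)/(12d)\<close> of its mean
  \<open>(m-1) I/6\<close>, then \<open>\<parallel>A z\<parallel>\<^sup>2 \<ge> 4 ((m-1)/6 - (m-1)/12) \<parallel>z\<parallel>\<^sup>2 = (m-1)/3 \<parallel>z\<parallel>\<^sup>2\<close>.\<close>
lemma concentration_imp_gram_lower: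
  fixes x :: "nat \<Rightarrow> real^'d::finite"
  assumes m: "m \<ge> 2"
    and dev: "\<And>i j. \<bar>deviation i j {..<m-1} x\<bar> \<le> real (m-1) / (12 * real CARD('d))"
  shows "gram_lower (3 / (real m - 1)) m x"
  unfolding gram_lower_def
proof
  fix z :: "real^'d"
  define n where "n = real (m - 1)"
  have n: "n > 0" "real m - 1 = n" using m by (auto simp: n_def)
  define Q where "Q E = (\<Sum>i\<in>UNIV. \<Sum>j\<in>UNIV. z $ i * z $ j * E i j)" for E :: "'d \<Rightarrow> 'd \<Rightarrow> real"
  have entries: "(\<Sum>k<m-1. incr_prod i j k x) = n * incr_mean i j + deviation i j {..<m-1} x" for i j
    by (simp add: deviation_def n_def)
  have "(\<Sum>k<m-1. (A_row x k \<bullet> z)\<^sup>2) = 4 * Q (\<lambda>i j. n * incr_mean i j + deviation i j {..<m-1} x)"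
    by (simp only: sum_A_row_inner_sq Q_def entries)
  also have "\<dots> = 4 * Q (\<lambda>i j. n * incr_mean i j) + 4 * Q (\<lambda>i j. deviation i j {..<m-1} x)"
    by (simp add: Q_def distrib_left sum.distrib)
  also have "Q (\<lambda>i j. n * incr_mean i j) = n / 6 * (norm z)\<^sup>2"
    unfolding Q_def incr_mean_def norm_square_vec
    by (simp add: sum_distrib_left power2_eq_square if_distrib[of "(*) _"] mult_ac cong: if_cong)
  finally have split: "(\<Sum>k<m-1. (A_row x k \<bullet> z)\<^sup>2)
      = 4 * (n / 6 * (norm z)\<^sup>2) + 4 * Q (\<lambda>i j. deviation i j {..<m-1} x)" .
  have "\<bar>Q (\<lambda>i j. deviation i j {..<m-1} x)\<bar> \<le> n / 12 * (norm z)\<^sup>2"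
    using quadratic_form_entrywise_bound[of "\<lambda>i j. deviation i j {..<m-1} x", OF dev, of z]
    by (simp add: Q_def n_def)
  then have "(\<Sum>k<m-1. (A_row x k \<bullet> z)\<^sup>2) \<ge> n / 3 * (norm z)\<^sup>2"
    unfolding split by linarith
  then show "(norm z)\<^sup>2 \<le> 3 / (real m - 1) * (\<Sum>k<m-1. (A_row x k \<bullet> z)\<^sup>2)"
    using n by (simp add: field_simps)
qed

section \<open>The probability bound\<close>

text \<open>Indices of one parity: the corresponding increments involve pairwise disjoint pairs of
  points and are therefore independent.\<close>
definition parity_class :: "nat \<Rightarrow> nat \<Rightarrow> nat set" where
  "parity_class m p = {k. k < m - 1 \<and> k mod 2 = p}"

lemma parity_class_subset: "parity_class m p \<subseteq> {k. Suc k < m}"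
  by (auto simp: parity_class_def)

lemma finite_parity_class: "finite (parity_class m p)"
  by (rule finite_subset[of _ "{..<m}"]) (auto simp: parity_class_def)

lemma disjoint_parity_class: "disjoint_family_on (\<lambda>k. {k, Suc k}) (parity_class m p)"
  unfolding disjoint_family_on_def parity_class_def by auto presburger+

lemma card_parity_class: "card (parity_class m p) \<le> m"
proof -
  have "card (parity_class m p) \<le> card {..<m}"
    by (rule card_mono) (auto simp: parity_class_def)
  then show ?thesis by simp
qed

lemma parity_class_nonempty: "m \<ge> 3 \<Longrightarrow> p < 2 \<Longrightarrow> parity_class m p \<noteq> {}"
  by (auto simp: parity_class_def intro!: exI[of _ p])

lemma deviation_union:
  assumes "finite K" "finite L" "K \<inter> L = {}"
  shows "deviation i j (K \<union> L) x = deviation i j K x + deviation i j L x"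
proof -
  have "card (K \<union> L) = card K + card L" using assms by (rule card_Un_disjoint)
  moreover have "(\<Sum>k\<in>K \<union> L. incr_prod i j k x) = (\<Sum>k\<in>K. incr_prod i j k x) + (\<Sum>k\<in>L. incr_prod i j k x)"
    using assms by (rule sum.union_disjoint)
  ultimately show ?thesis by (simp add: deviation_def algebra_simps)
qed

lemma deviation_parity_split:
  "deviation i j {..<m-1} x = deviation i j (parity_class m 0) x + deviation i j (parity_class m 1) x"
proof -
  have "{..<m-1} = parity_class m 0 \<union> parity_class m 1" by (auto simp: parity_class_def)
  moreover have "parity_class m 0 \<inter> parity_class m 1 = {}" by (auto simp: parity_class_def)
  ultimately show ?thesis
    by (simp only: deviation_union finite_parity_class)
qed

lemma (in prob_space) union_bound_complement:
  assumes "finite I" and B: "\<And>q. q \<in> I \<Longrightarrow> B q \<in> events" and "G \<in> events"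
    and cover: "space M - (\<Union>q\<in>I. B q) \<subseteq> G" and b: "\<And>q. q \<in> I \<Longrightarrow> prob (B q) \<le> b"
  shows "1 - real (card I) * b \<le> prob G"
proof -
  have "(\<Sum>q\<in>I. prob (B q)) \<le> real (card I) * b"
    using sum_mono[of I "\<lambda>q. prob (B q)" "\<lambda>_. b"] b by simp
  moreover have "prob (\<Union>q\<in>I. B q) \<le> (\<Sum>q\<in>I. prob (B q))"
    using B by (intro finite_measure_subadditive_finite[OF \<open>finite I\<close>]) auto
  moreover have "prob (space M - (\<Union>q\<in>I. B q)) = 1 - prob (\<Union>q\<in>I. B q)"
    using B \<open>finite I\<close> by (intro prob_compl) auto
  moreover have "prob (space M - (\<Union>q\<in>I. B q)) \<le> prob G"
    using B \<open>finite I\<close> \<open>G \<in> events\<close> cover by (intro finite_measure_mono) auto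
  ultimately show ?thesis by linarith
qed

lemma parity_deviation_tail_bound:
  assumes "m \<ge> 3" and "p < 2" and "t \<ge> 0"
  shows "measure (sample_space m :: (nat \<Rightarrow> real^'d::finite) measure)
           {x \<in> space (sample_space m). t \<le> \<bar>deviation i j (parity_class m p) x\<bar>}
         \<le> 2 * exp (- t\<^sup>2 / (2 * real m))"
proof -
  have ne: "parity_class m p \<noteq> {}" using assms by (intro parity_class_nonempty)
  then have "real (card (parity_class m p)) > 0" by (simp add: card_gt_0_iff finite_parity_class)
  then have "t\<^sup>2 / (2 * real m) \<le> t\<^sup>2 / (2 * real (card (parity_class m p)))"
    using card_parity_class[of m p] by (intro frac_le) auto
  then have "2 * exp (- t\<^sup>2 / (2 * real (card (parity_class m p)))) \<le> 2 * exp (- t\<^sup>2 / (2 * real m))"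
    by simp
  moreover have "measure (sample_space m :: (nat \<Rightarrow> real^'d) measure)
           {x \<in> space (sample_space m). t \<le> \<bar>deviation i j (parity_class m p) x\<bar>}
         \<le> 2 * exp (- t\<^sup>2 / (2 * real (card (parity_class m p))))"
    by (rule deviation_tail_bound[OF parity_class_subset disjoint_parity_class ne \<open>t \<ge> 0\<close>])
  ultimately show ?thesis by linarith
qed

lemma parity_concentration_imp_gram_lower:
  fixes x :: "nat \<Rightarrow> real^'d::finite"
  assumes "m \<ge> 2"
    and small: "\<And>i j p. p < 2 \<Longrightarrow> \<bar>deviation i j (parity_class m p) x\<bar> < real (m-1) / (24 * real CARD('d))"
  shows "gram_lower (3 / (real m - 1)) m x"
proof (rule concentration_imp_gram_lower[OF \<open>m \<ge> 2\<close>])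
  fix i j
  have "\<bar>deviation i j {..<m-1} x\<bar> \<le> 2 * (real (m-1) / (24 * real CARD('d)))"
    unfolding deviation_parity_split using small[of 0 i j] small[of 1 i j] by linarith
  then show "\<bar>deviation i j {..<m-1} x\<bar> \<le> real (m-1) / (12 * real CARD('d))" by simp
qed

text \<open>The bound for fixed \<open>m \<ge> 3\<close>: apply Hoeffding with \<open>t = (m-1)/(24d)\<close> to each of the \<open>2d\<^sup>2\<close>
  pairs (entry, parity class) and take a union bound; outside the \<open>2d\<^sup>2\<close> bad events the Gram
  matrix bound holds.\<close>
lemma pinv_bound_probability:
  assumes m: "m \<ge> 3"
  shows "measure (sample_space m :: (nat \<Rightarrow> real^'d::finite) measure)
      {x \<in> space (sample_space m).
         invertible (gram m x) \<and> spec_norm (m - 1) (pinv_col m x) \<le> sqrt (3 / (real m - 1))}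
    \<ge> 1 - 4 * (real CARD('d))\<^sup>2 * exp (- ((real m - 1)\<^sup>2 / (1152 * (real CARD('d))\<^sup>2 * real m)))"
proof -
  let ?M = "sample_space m :: (nat \<Rightarrow> real^'d) measure"
  interpret M: prob_space ?M by (rule prob_space_sample_space)
  define d where "d = real CARD('d)"
  define t where "t = real (m - 1) / (24 * d)"
  define I where "I = (UNIV :: 'd set) \<times> (UNIV :: 'd set) \<times> {0::nat, 1}"
  define B where "B = (\<lambda>(i, j, p). {x \<in> space ?M. t \<le> \<bar>deviation i j (parity_class m p) x\<bar>})"
  let ?G = "{x \<in> space ?M. gram_lower (3 / (real m - 1)) m x}"
  have B_sets: "B q \<in> M.events" for q
  proof -
    obtain i j p where q: "q = (i, j, p)" by (cases q)
    have [measurable]: "(\<lambda>x. deviation i j (parity_class m p) x) \<in> borel_measurable ?M"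
      unfolding deviation_def using parity_class_subset
      by (intro borel_measurable_diff borel_measurable_sum borel_measurable_const measurable_incr_prod)
         auto
    show ?thesis unfolding q B_def prod.case by measurable
  qed
  have B_prob: "M.prob (B q) \<le> 2 * exp (- t\<^sup>2 / (2 * real m))" if "q \<in> I" for q
  proof -
    obtain i j p where q: "q = (i, j, p)" and p: "p < 2" using \<open>q \<in> I\<close> by (auto simp: I_def)
    have "t \<ge> 0" by (simp add: t_def d_def)
    then show ?thesis
      unfolding q B_def prod.case by (rule parity_deviation_tail_bound[OF m p])
  qed
  have cover: "space ?M - (\<Union>q\<in>I. B q) \<subseteq> ?G"
  proof
    fix x assume x: "x \<in> space ?M - (\<Union>q\<in>I. B q)"
    have "\<bar>deviation i j (parity_class m p) x\<bar> < t" if "p < 2" for i j p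
    proof -
      have "(i, j, p) \<in> I" using that by (auto simp: I_def)
      then show ?thesis using x by (auto simp: B_def)
    qed
    then show "x \<in> ?G"
      using x m by (auto simp: t_def d_def intro!: parity_concentration_imp_gram_lower)
  qed
  have "1 - real (card I) * (2 * exp (- t\<^sup>2 / (2 * real m))) \<le> M.prob ?G"
    using B_sets B_prob cover sets_gram_lower by (intro M.union_bound_complement) (auto simp: I_def)
  moreover have "?G = {x \<in> space ?M. invertible (gram m x) \<and>
      spec_norm (m - 1) (pinv_col m x) \<le> sqrt (3 / (real m - 1))}"
    using pinv_bound_iff_gram_lower[of "3 / (real m - 1)"] m by auto
  moreover have "real (card I) = 2 * d\<^sup>2" by (simp add: I_def card_cartesian_product d_def power2_eq_square)
  moreover have "t\<^sup>2 / (2 * real m) = (real m - 1)\<^sup>2 / (1152 * d\<^sup>2 * real m)"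
    using m by (simp add: t_def power_divide power_mult_distrib of_nat_diff)
  ultimately show ?thesis by (simp add: d_def mult_ac)
qed

section \<open>Asymptotics and the main theorem\<close>

text \<open>The Hoeffding exponent \<open>(m-1)\<^sup>2/(c m)\<close> grows linearly in \<open>m\<close>, so it eventually beats
  \<open>m\<^sup>\<alpha> + ln(4/3)\<close> for any \<open>\<alpha> < 1\<close>.\<close>
lemma eventually_exp_comparison:
  fixes \<alpha> c :: real
  assumes "\<alpha> < 1" and "c > 0"
  shows "\<forall>\<^sub>F m in sequentially.
           4 * exp (- ((real m - 1)\<^sup>2 / (c * real m))) \<le> 3 * exp (- (real m powr \<alpha>))"
proof -
  have "filterlim (\<lambda>m::nat. (real m - 1)\<^sup>2 / (c * real m) - real m powr \<alpha>) at_top sequentially"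
    using assms by real_asymp
  then have "\<forall>\<^sub>F m in sequentially. ln (4/3) \<le> (real m - 1)\<^sup>2 / (c * real m) - real m powr \<alpha>"
    by (simp add: filterlim_at_top)
  then show ?thesis
  proof (rule eventually_mono)
    fix m :: nat
    assume "ln (4/3) \<le> (real m - 1)\<^sup>2 / (c * real m) - real m powr \<alpha>"
    then have "exp (- ((real m - 1)\<^sup>2 / (c * real m))) \<le> exp (- (real m powr \<alpha>) - ln (4/3))"
      by simp
    also have "\<dots> = 3/4 * exp (- (real m powr \<alpha>))"
      by (simp add: exp_diff)
    finally show "4 * exp (- ((real m - 1)\<^sup>2 / (c * real m))) \<le> 3 * exp (- (real m powr \<alpha>))"
      by simp
  qed
qed

theorem mainTheorem9:
  fixes \<epsilon> :: real
  assumes "0 < \<epsilon>" and "\<epsilon> < 1/2"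
  shows "\<exists>M::nat. \<forall>m\<ge>M.
    measure (sample_space m :: (nat \<Rightarrow> real^'d::finite) measure)
      {x \<in> space (sample_space m).
         invertible (gram m x) \<and>
         spec_norm (m - 1) (pinv_col m x) \<le> sqrt (3 / (real m - 1))}
    \<ge> 1 - 3 * (real CARD('d))\<^sup>2 * exp (- (real m powr (2 * \<epsilon>)))"
proof -
  define d where "d = real CARD('d)"
  have "\<forall>\<^sub>F m in sequentially.
      4 * exp (- ((real m - 1)\<^sup>2 / (1152 * d\<^sup>2 * real m))) \<le> 3 * exp (- (real m powr (2 * \<epsilon>)))"
    using assms by (intro eventually_exp_comparison) (auto simp: d_def)
  then obtain M0 where M0: "\<And>m. m \<ge> M0 \<Longrightarrow>
      4 * exp (- ((real m - 1)\<^sup>2 / (1152 * d\<^sup>2 * real m))) \<le> 3 * exp (- (real m powr (2 * \<epsilon>)))"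
    unfolding eventually_sequentially by blast
  show ?thesis
  proof (intro exI[of _ "max M0 3"] allI impI)
    fix m assume "max M0 3 \<le> m"
    then have "m \<ge> 3" "m \<ge> M0" by auto
    have "1 - 3 * d\<^sup>2 * exp (- (real m powr (2 * \<epsilon>)))
        \<le> 1 - 4 * d\<^sup>2 * exp (- ((real m - 1)\<^sup>2 / (1152 * d\<^sup>2 * real m)))"
      using mult_left_mono[OF M0[OF \<open>m \<ge> M0\<close>], of "d\<^sup>2"] by (simp add: mult_ac)
    also have "\<dots> \<le> measure (sample_space m :: (nat \<Rightarrow> real^'d) measure)
      {x \<in> space (sample_space m).
         invertible (gram m x) \<and> spec_norm (m - 1) (pinv_col m x) \<le> sqrt (3 / (real m - 1))}"
      using pinv_bound_probability[OF \<open>m \<ge> 3\<close>] unfolding d_def .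
    finally show "measure (sample_space m :: (nat \<Rightarrow> real^'d) measure)
      {x \<in> space (sample_space m).
         invertible (gram m x) \<and> spec_norm (m - 1) (pinv_col m x) \<le> sqrt (3 / (real m - 1))}
      \<ge> 1 - 3 * (real CARD('d))\<^sup>2 * exp (- (real m powr (2 * \<epsilon>)))"
      unfolding d_def .
  qed
qed

end
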